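(* Let $0\le p\le1$ and let $\hat\rho=|\psi\rangle\langle\psi|$ with $|\psi\rangle$ any of $|\Phi^\pm\rangle=\sqrt p|0,0\rangle\pm\sqrt{1-p}|1,1\rangle$ or $|\Psi^\pm\rangle=\sqrt p|0,1\rangle\pm\sqrt{1-p}|1,0\rangle$ (Fock states of modes $A,B$). Then $Q(\hat\rho)=\frac{4}{\pi}\sqrt{p(1-p)}$, which equals $\frac{4}{\pi}$ times the negativity $\sqrt{p(1-p)}$ of $\hat\rho$; moreover the sign-binned quadrature correlation at $\theta=\varphi=0$, $E^{0,0}=\int\!\!\int f_{0,0}(u,v)\,\mathrm{sgn}(uv)\,du\,dv$, satisfies $|E^{0,0}|=\frac{4}{\pi}\sqrt{p(1-p)}$.
   Context: $|n\rangle$ are photon-number (Fock) states of a mode with quadratures $\hat x=(\hat a+\hat a^\dagger)/\sqrt2$, $\hat p=i(\hat a^\dagger-\hat a)/\sqrt2$. For angles $\theta,\varphi$, $\hat x_A^\theta=\cos\theta\,\hat x_A+\sin\theta\,\hat p_A$, $\hat x_B^\varphi=\cos\varphi\,\hat x_B+\sin\varphi\,\hat p_B$, and $f_{\theta,\varphi}(u,v)$ is the joint density of their outcomes on $\hat\rho$. For $u,v\ge0$, $S=f(u,v)+f(-u,-v)+f(u,-v)+f(-u,v)$, $D=f(u,v)+f(-u,-v)-f(u,-v)-f(-u,v)$, $\mathcal B_{\theta,\varphi}=|D|/S$ (0 where $S=0$), and $Q(\hat\rho)=\sup_{\theta,\varphi}\int\!\!\int f_{\theta,\varphi}(u,v)\mathcal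 B_{\theta,\varphi}(|u|,|v|)\,du\,dv$. *)

theory Defs
  imports "HOL-Analysis.Analysis"
begin

fun hermite :: "nat \<Rightarrow> real \<Rightarrow> real" where
  "hermite 0 x = 1"
| "hermite (Suc 0) x = 2 * x"
| "hermite (Suc (Suc n)) x = 2 * x * hermite (Suc n) x - 2 * real (Suc n) * hermite n x"

text \<open>Position-space wavefunction of the Fock state |n>, for the quadrature x = (a + a^dag)/sqrt 2.\<close>
definition fock_wf :: "nat \<Rightarrow> real \<Rightarrow> real" where
  "fock_wf n x = hermite n x * exp (- (x^2) / 2) / sqrt (2 ^ n * fact n * sqrt pi)"

text \<open>A two-mode pure state given by finitely many Fock coefficients c m n = <m,n|psi>.
  Its amplitude in the eigenbasis of (x_A^theta, x_B^phi):
  <u|_theta <v|_phi |psi> = sum c m n e^{-i m theta} e^{-i n phi} psi_m(u) psi_n(v),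
  since x^theta = e^{i theta N} x e^{-i theta N}.\<close>
definition quad_amp :: "(nat \<Rightarrow> nat \<Rightarrow> complex) \<Rightarrow> real \<Rightarrow> real \<Rightarrow> real \<Rightarrow> real \<Rightarrow> complex" where
  "quad_amp c \<theta> \<phi> u v =
     (\<Sum>(m,n)\<in>{(m,n). c m n \<noteq> 0}.
        c m n * cis (- (real m * \<theta>)) * cis (- (real n * \<phi>))
        * complex_of_real (fock_wf m u * fock_wf n v))"

definition quad_density :: "(nat \<Rightarrow> nat \<Rightarrow> complex) \<Rightarrow> real \<Rightarrow> real \<Rightarrow> real \<Rightarrow> real \<Rightarrow> real" where
  "quad_density c \<theta> \<phi> u v = (cmod (quad_amp c \<theta> \<phi> u v))\<^sup>2"

definition binS :: "(real \<Rightarrow> real \<Rightarrow> real) \<Rightarrow> real \<Rightarrow> real \<Rightarrow> real" where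
  "binS f u v = f u v + f (-u) (-v) + f u (-v) + f (-u) v"

definition binD :: "(real \<Rightarrow> real \<Rightarrow> real) \<Rightarrow> real \<Rightarrow> real \<Rightarrow> real" where
  "binD f u v = f u v + f (-u) (-v) - f u (-v) - f (-u) v"

definition binB :: "(real \<Rightarrow> real \<Rightarrow> real) \<Rightarrow> real \<Rightarrow> real \<Rightarrow> real" where
  "binB f u v = (if binS f u v = 0 then 0 else \<bar>binD f u v\<bar> / binS f u v)"

definition Qcorr :: "(nat \<Rightarrow> nat \<Rightarrow> complex) \<Rightarrow> real" where
  "Qcorr c = (SUP tp \<in> (UNIV :: (real \<times> real) set).
      (LINT z | lborel.
         quad_density c (fst tp) (snd tp) (fst z) (snd z)
         * binB (quad_density c (fst tp) (snd tp)) \<bar>fst z\<bar> \<bar>snd z\<bar>))"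

definition E00 :: "(nat \<Rightarrow> nat \<Rightarrow> complex) \<Rightarrow> real" where
  "E00 c = (LINT z | lborel. quad_density c 0 0 (fst z) (snd z) * sgn (fst z * snd z))"

definition Phi_state :: "real \<Rightarrow> real \<Rightarrow> nat \<Rightarrow> nat \<Rightarrow> complex" where
  "Phi_state s p m n =
     (if (m, n) = (0, 0) then complex_of_real (sqrt p)
      else if (m, n) = (1, 1) then complex_of_real (s * sqrt (1 - p)) else 0)"

definition Psi_state :: "real \<Rightarrow> real \<Rightarrow> nat \<Rightarrow> nat \<Rightarrow> complex" where
  "Psi_state s p m n =
     (if (m, n) = (0, 1) then complex_of_real (sqrt p)
      else if (m, n) = (1, 0) then complex_of_real (s * sqrt (1 - p)) else 0)"

end

theory Submission
  imports Defs "HOL-Probability.Distributions"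
begin

(* For each of the four states the joint quadrature density has the shape
     f(u,v) = G(u,v) (E(u,v) + k(theta,phi) u v),   G(u,v) = exp(-u^2-v^2)/pi,
   with E even in u and in v and k(theta,phi) = 4 s sqrt(p(1-p)) cos(theta +- phi);
   positivity of f forces |k u v| <= E.  Then S = 4 G E and D = 4 G k u v, so
   f B = G |k u v| + (a part odd in u and dominated by G |k u v|), and the odd part integrates
   to 0.  What remains is |k|/pi (int exp(-x^2)|x| dx)^2 = |k|/pi, largest at theta = phi = 0.
   The same parity argument applied to f sgn(uv) gives E^{0,0} = k(0,0)/pi. *)

lemma integrable_exp_neg_sq_power: "integrable lborel (\<lambda>x::real. exp (- x\<^sup>2) * x ^ n)"
proof (cases "even n")
  case True
  then obtain k where n: "n = 2 * k" by (elim evenE)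
  show ?thesis unfolding n
    by (rule integrable.intros[OF has_bochner_integral_even_function[OF gaussian_moment_even_pos]])
       (simp add: power_mult)
next
  case False
  then obtain k where n: "n = 2 * k + 1" by (elim oddE)
  show ?thesis unfolding n
    by (rule integrable.intros[OF has_bochner_integral_odd_function[OF gaussian_moment_odd_pos]]) simp
qed

lemma has_bochner_integral_exp_neg_sq_abs: "has_bochner_integral lborel (\<lambda>x::real. exp (- x\<^sup>2) * \<bar>x\<bar>) 1"
proof -
  have "has_bochner_integral lborel (\<lambda>x::real. indicator {0..} x *\<^sub>R (exp (- x\<^sup>2) * \<bar>x\<bar>)) (1/2)"
    using gaussian_moment_odd_pos[of 0]
    by (rule has_bochner_integral_cong[THEN iffD1, rotated 3]) (auto split: split_indicator)
  from has_bochner_integral_even_function[OF this] show ?thesis by simp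
qed

lemma has_bochner_integral_lborel_product:
  fixes f g :: "real \<Rightarrow> real"
  assumes f: "has_bochner_integral lborel f a" and g: "has_bochner_integral lborel g b"
  shows "has_bochner_integral lborel (\<lambda>z. f (fst z) * g (snd z)) (a * b)"
proof -
  have [measurable]: "f \<in> borel_measurable borel" "g \<in> borel_measurable borel"
    using f g by (auto dest: has_bochner_integral_integrable)
  have "integrable (lborel \<Otimes>\<^sub>M lborel) (\<lambda>z. f (fst z) * g (snd z))"
  proof (rule lborel_pair.Fubini_integrable)
    show "integrable lborel (\<lambda>x. \<integral>y. norm (f (fst (x, y)) * g (snd (x, y))) \<partial>lborel)"
      using f g by (auto simp: abs_mult has_bochner_integral_iff)
    show "AE x in lborel. integrable lborel (\<lambda>y. f (fst (x, y)) * g (snd (x, y)))"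
      using g by (auto simp: has_bochner_integral_iff)
  qed measurable
  moreover have "(\<integral>x. (\<integral>y. f x * g y \<partial>lborel) \<partial>lborel) = a * b"
    using f g by (simp add: has_bochner_integral_integral_eq)
  ultimately show ?thesis
    using lborel_pair.integral_fst'[of "\<lambda>z. f (fst z) * g (snd z)"]
    by (simp add: lborel_prod has_bochner_integral_iff)
qed

lemma has_bochner_integral_exp_neg_sq_abs_product:
  "has_bochner_integral lborel
     (\<lambda>z :: real \<times> real. (exp (- (fst z)\<^sup>2) * \<bar>fst z\<bar>) * (exp (- (snd z)\<^sup>2) * \<bar>snd z\<bar>)) 1"
  using has_bochner_integral_lborel_product
      [OF has_bochner_integral_exp_neg_sq_abs has_bochner_integral_exp_neg_sq_abs]
  by simp

lemma integral_lborel_pair_odd_fst: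
  fixes h :: "real \<times> real \<Rightarrow> real"
  assumes h: "integrable lborel h" and odd: "\<And>u v. h (-u, v) = - h (u, v)"
  shows "integral\<^sup>L lborel h = 0"
proof -
  have inner: "(\<integral>u. h (u, v) \<partial>lborel) = 0" for v
  proof -
    have "(\<integral>u. h (u, v) \<partial>lborel) = \<bar>-1\<bar> *\<^sub>R (\<integral>u. h (0 + (-1) * u, v) \<partial>lborel)"
      by (rule lborel_integral_real_affine) simp
    then show ?thesis by (simp add: odd)
  qed
  have "integral\<^sup>L lborel h = (\<integral>v. (\<integral>u. h (u, v) \<partial>lborel) \<partial>lborel)"
    using lborel_pair.integral_snd[of "\<lambda>u v. h (u, v)"] h by (simp add: lborel_prod)
  then show ?thesis by (simp add: inner)
qed

lemma quad_density_nonneg: "0 \<le> quad_density \<psi> \<theta> \<phi> u v"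
  by (simp add: quad_density_def)

context
  fixes E :: "real \<Rightarrow> real \<Rightarrow> real"
  assumes E_even: "\<And>u v. E (- u) v = E u v" "\<And>u v. E u (- v) = E u v"
    and E_measurable: "(\<lambda>z. E (fst z) (snd z)) \<in> borel_measurable borel"
    and gaussian_E_integrable:
      "integrable lborel (\<lambda>z. exp (- (fst z)\<^sup>2) * exp (- (snd z)\<^sup>2) * E (fst z) (snd z))"
begin

lemma E_abs: "E \<bar>u\<bar> \<bar>v\<bar> = E u v"
  by (cases "0 \<le> u"; cases "0 \<le> v") (simp_all add: E_even)

lemma E_measurable_pair [measurable]:
  "(\<lambda>z. E (fst z) (snd z)) \<in> borel_measurable (lborel \<Otimes>\<^sub>M lborel)"
  using E_measurable by (simp add: lborel_prod)

context
  fixes k :: real and f :: "real \<Rightarrow> real \<Rightarrow> real"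
  assumes density: "\<And>u v. f u v = exp (- u\<^sup>2) * exp (- v\<^sup>2) / pi * (E u v + k * u * v)"
    and density_nonneg: "\<And>u v. 0 \<le> f u v"
begin

lemma abs_correlation_le: "\<bar>k * u * v\<bar> \<le> E u v"
proof -
  have "0 \<le> E w v + k * w * v" for w
  proof -
    have "0 \<le> exp (- w\<^sup>2) * exp (- v\<^sup>2) / pi * (E w v + k * w * v)"
      using density_nonneg[of w v] by (simp only: density)
    moreover have "0 < exp (- w\<^sup>2) * exp (- v\<^sup>2) / pi"
      by simp
    ultimately show ?thesis
      by (metis mult_le_cancel_left_pos mult_zero_right)
  qed
  from this[of u] this[of "- u"] show ?thesis by (simp add: E_even)
qed

lemma E_nonneg: "0 \<le> E u v"
  using abs_correlation_le[of u v] by linarith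

lemma binS_density: "binS f u v = 4 * (exp (- u\<^sup>2) * exp (- v\<^sup>2) / pi) * E u v"
  by (simp add: binS_def density E_even field_simps)

lemma binD_density: "binD f u v = 4 * (exp (- u\<^sup>2) * exp (- v\<^sup>2) / pi) * (k * u * v)"
  by (simp add: binD_def density E_even field_simps)

lemma binB_density: "binB f u v = (if E u v = 0 then 0 else \<bar>k * u * v\<bar> / E u v)"
  using abs_correlation_le[of u v] by (simp add: binB_def binS_density binD_density abs_mult)

lemma integral_binned_correlation:
  "(LINT z|lborel. f (fst z) (snd z) * binB f \<bar>fst z\<bar> \<bar>snd z\<bar>) = \<bar>k\<bar> / pi"
proof -
  let ?G = "\<lambda>z::real \<times> real. exp (- (fst z)\<^sup>2) * exp (- (snd z)\<^sup>2) / pi"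
  let ?c = "\<lambda>z::real \<times> real. k * fst z * snd z"
  define m where "m z = ?G z * \<bar>?c z\<bar>" for z
  define r where "r z = (if E (fst z) (snd z) = 0 then 0 else ?G z * ?c z * \<bar>?c z\<bar> / E (fst z) (snd z))" for z
  have "m = (\<lambda>z. \<bar>k\<bar> / pi * ((exp (- (fst z)\<^sup>2) * \<bar>fst z\<bar>) * (exp (- (snd z)\<^sup>2) * \<bar>snd z\<bar>)))"
    by (simp add: m_def abs_mult fun_eq_iff)
  then have m: "has_bochner_integral lborel m (\<bar>k\<bar> / pi)"
    using has_bochner_integral_mult_right[OF has_bochner_integral_exp_neg_sq_abs_product, of "\<bar>k\<bar> / pi"]
    by simp
  have split: "f (fst z) (snd z) * binB f \<bar>fst z\<bar> \<bar>snd z\<bar> = m z + r z" for z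
  proof (cases "E (fst z) (snd z) = 0")
    case True
    then have "?c z = 0"
      using abs_correlation_le[of "fst z" "snd z"] by simp
    with True show ?thesis
      by (simp add: binB_density E_abs m_def r_def)
  next
    case False
    then show ?thesis
      by (simp add: binB_density E_abs density m_def r_def abs_mult field_simps)
  qed
  have r_measurable: "r \<in> borel_measurable (lborel \<Otimes>\<^sub>M lborel)"
    unfolding r_def by measurable
  have r_le: "norm (r z) \<le> m z" for z
  proof (cases "E (fst z) (snd z) = 0")
    case False
    moreover have "\<bar>?c z\<bar> \<le> E (fst z) (snd z)"
      by (rule abs_correlation_le)
    ultimately have "\<bar>?c z\<bar> / E (fst z) (snd z) \<le> 1"
      by simp
    then have "?G z * \<bar>?c z\<bar> * (\<bar>?c z\<bar> / E (fst z) (snd z)) \<le> ?G z * \<bar>?c z\<bar> * 1"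
      by (intro mult_left_mono) auto
    with False show ?thesis
      by (simp add: r_def m_def abs_mult abs_of_nonneg[OF E_nonneg])
  qed (simp add: r_def m_def)
  have "integrable lborel r"
  proof (rule Bochner_Integration.integrable_bound)
    show "integrable lborel m"
      using m by (rule integrable.intros)
    show "r \<in> borel_measurable lborel"
      using r_measurable by (simp only: lborel_prod)
    show "AE z in lborel. norm (r z) \<le> norm (m z)"
      by (intro AE_I2 order_trans[OF r_le]) simp
  qed
  moreover have "integral\<^sup>L lborel r = 0"
    by (rule integral_lborel_pair_odd_fst[OF calculation]) (simp add: r_def E_even)
  ultimately show ?thesis
    using m by (simp add: split has_bochner_integral_iff)
qed

lemma integral_sign_correlation:
  "(LINT z|lborel. f (fst z) (snd z) * sgn (fst z * snd z)) = k / pi"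
proof -
  let ?G = "\<lambda>z::real \<times> real. exp (- (fst z)\<^sup>2) * exp (- (snd z)\<^sup>2) / pi"
  define m where "m z = k / pi * ((exp (- (fst z)\<^sup>2) * \<bar>fst z\<bar>) * (exp (- (snd z)\<^sup>2) * \<bar>snd z\<bar>))" for z
  define r where "r z = ?G z * E (fst z) (snd z) * sgn (fst z * snd z)" for z
  have m: "has_bochner_integral lborel m (k / pi)"
    using has_bochner_integral_mult_right[OF has_bochner_integral_exp_neg_sq_abs_product, of "k / pi"]
    by (simp add: m_def[abs_def])
  have split: "f (fst z) (snd z) * sgn (fst z * snd z) = m z + r z" for z
  proof -
    have "f (fst z) (snd z) * sgn (fst z * snd z)
        = ?G z * k * (fst z * snd z * sgn (fst z * snd z)) + r z"
      by (simp add: density r_def field_simps)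
    also have "fst z * snd z * sgn (fst z * snd z) = \<bar>fst z\<bar> * \<bar>snd z\<bar>"
      by (simp add: abs_sgn abs_mult sgn_mult)
    finally show ?thesis
      by (simp add: m_def)
  qed
  have "integrable lborel r"
  proof (rule Bochner_Integration.integrable_bound)
    show "integrable lborel (\<lambda>z. exp (- (fst z)\<^sup>2) * exp (- (snd z)\<^sup>2) * E (fst z) (snd z) / pi)"
      using gaussian_E_integrable by (rule integrable_divide)
    have "r \<in> borel_measurable (lborel \<Otimes>\<^sub>M lborel)"
      unfolding r_def by measurable
    then show "r \<in> borel_measurable lborel"
      by (simp only: lborel_prod)
    show "AE z in lborel. norm (r z) \<le> norm (exp (- (fst z)\<^sup>2) * exp (- (snd z)\<^sup>2) * E (fst z) (snd z) / pi)"
      by (intro AE_I2) (simp add: r_def abs_mult abs_sgn_eq)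
  qed
  moreover have "integral\<^sup>L lborel r = 0"
    by (rule integral_lborel_pair_odd_fst[OF calculation]) (simp add: r_def E_even)
  ultimately show ?thesis
    using m by (simp add: split has_bochner_integral_iff)
qed

end

lemma E00_eq:
  assumes "\<And>u v. quad_density \<psi> 0 0 u v = exp (- u\<^sup>2) * exp (- v\<^sup>2) / pi * (E u v + k * u * v)"
  shows "E00 \<psi> = k / pi"
  unfolding E00_def using assms quad_density_nonneg by (rule integral_sign_correlation)

lemma Qcorr_eq:
  fixes k :: "real \<Rightarrow> real \<Rightarrow> real"
  assumes density: "\<And>\<theta> \<phi> u v. quad_density \<psi> \<theta> \<phi> u v
      = exp (- u\<^sup>2) * exp (- v\<^sup>2) / pi * (E u v + k \<theta> \<phi> * u * v)"
    and maximal_at_0: "\<And>\<theta> \<phi>. \<bar>k \<theta> \<phi>\<bar> \<le> \<bar>k 0 0\<bar>"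
  shows "Qcorr \<psi> = \<bar>k 0 0\<bar> / pi"
proof -
  have "(LINT z|lborel. quad_density \<psi> \<theta> \<phi> (fst z) (snd z)
          * binB (quad_density \<psi> \<theta> \<phi>) \<bar>fst z\<bar> \<bar>snd z\<bar>) = \<bar>k \<theta> \<phi>\<bar> / pi" for \<theta> \<phi>
    using density quad_density_nonneg by (rule integral_binned_correlation)
  then have "Qcorr \<psi> = (SUP tp \<in> UNIV. \<bar>k (fst tp) (snd tp)\<bar> / pi)"
    unfolding Qcorr_def by simp
  also have "\<dots> = \<bar>k 0 0\<bar> / pi"
  proof (rule cSup_eq_maximum)
    show "\<bar>k 0 0\<bar> / pi \<in> range (\<lambda>tp. \<bar>k (fst tp) (snd tp)\<bar> / pi)"
      by (rule image_eqI[of _ _ "(0, 0)"]) simp_all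
  qed (auto intro: divide_right_mono maximal_at_0)
  finally show ?thesis .
qed

end

definition even_biquadratic :: "real \<Rightarrow> real \<Rightarrow> real \<Rightarrow> real \<Rightarrow> real \<Rightarrow> real \<Rightarrow> real" where
  "even_biquadratic a b c d u v = a + b * u\<^sup>2 + c * v\<^sup>2 + d * u\<^sup>2 * v\<^sup>2"

lemma even_biquadratic_even [simp]:
  "even_biquadratic a b c d (- u) v = even_biquadratic a b c d u v"
  "even_biquadratic a b c d u (- v) = even_biquadratic a b c d u v"
  by (simp_all add: even_biquadratic_def)

lemma borel_measurable_even_biquadratic:
  "(\<lambda>z. even_biquadratic a b c d (fst z) (snd z)) \<in> borel_measurable borel"
  by (intro borel_measurable_continuous_onI) (simp add: even_biquadratic_def continuous_intros)

lemma integrable_gaussian_even_biquadratic: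
  "integrable lborel (\<lambda>z. exp (- (fst z)\<^sup>2) * exp (- (snd z)\<^sup>2) * even_biquadratic a b c d (fst z) (snd z))"
proof -
  let ?P = "\<lambda>i j (z :: real \<times> real). (exp (- (fst z)\<^sup>2) * fst z ^ i) * (exp (- (snd z)\<^sup>2) * snd z ^ j)"
  have P: "integrable lborel (?P i j)" for i j
    using has_bochner_integral_lborel_product[OF
        has_bochner_integral_integrable[OF integrable_exp_neg_sq_power[of i]]
        has_bochner_integral_integrable[OF integrable_exp_neg_sq_power[of j]]]
    by (rule integrable.intros)
  have eq: "(\<lambda>z. exp (- (fst z)\<^sup>2) * exp (- (snd z)\<^sup>2) * even_biquadratic a b c d (fst z) (snd z))
      = (\<lambda>z. a * ?P 0 0 z + b * ?P 2 0 z + c * ?P 0 2 z + d * ?P 2 2 z)"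
    by (simp add: fun_eq_iff even_biquadratic_def algebra_simps)
  show ?thesis
    unfolding eq by (intro Bochner_Integration.integrable_add integrable_mult_right P)
qed

lemma correlations_of_density:
  assumes density: "\<And>\<theta> \<phi> u v. quad_density \<psi> \<theta> \<phi> u v = exp (- u\<^sup>2) * exp (- v\<^sup>2) / pi
      * (even_biquadratic a b c d u v + K * cos (w \<theta> \<phi>) * u * v)"
    and "w 0 0 = 0"
  shows "Qcorr \<psi> = \<bar>K\<bar> / pi" and "E00 \<psi> = K / pi"
proof -
  have "Qcorr \<psi> = \<bar>K * cos (w 0 0)\<bar> / pi"
    using even_biquadratic_even borel_measurable_even_biquadratic
      integrable_gaussian_even_biquadratic density
    by (rule Qcorr_eq) (simp add: \<open>w 0 0 = 0\<close> abs_mult mult_left_le)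
  then show "Qcorr \<psi> = \<bar>K\<bar> / pi"
    using \<open>w 0 0 = 0\<close> by simp
  have "E00 \<psi> = K * cos (w 0 0) / pi"
    using even_biquadratic_even borel_measurable_even_biquadratic
      integrable_gaussian_even_biquadratic density
    by (rule E00_eq)
  then show "E00 \<psi> = K / pi"
    using \<open>w 0 0 = 0\<close> by simp
qed

lemma fock_wf_0: "fock_wf 0 x = exp (- x\<^sup>2 / 2) / sqrt (sqrt pi)"
  by (simp add: fock_wf_def)

lemma fock_wf_1: "fock_wf 1 x = sqrt 2 * x * fock_wf 0 x"
proof -
  have "fock_wf 1 x = 2 * x * exp (- x\<^sup>2 / 2) / (sqrt 2 * sqrt (sqrt pi))"
    by (simp add: fock_wf_def real_sqrt_mult)
  also have "\<dots> = (sqrt 2 * sqrt 2) * x * exp (- x\<^sup>2 / 2) / (sqrt 2 * sqrt (sqrt pi))"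
    by simp
  also have "\<dots> = sqrt 2 * x * fock_wf 0 x"
    by (simp only: fock_wf_0 mult.assoc mult_divide_mult_cancel_left_if) simp
  finally show ?thesis .
qed

lemma fock_wf_0_product_sq: "(fock_wf 0 u * fock_wf 0 v)\<^sup>2 = exp (- u\<^sup>2) * exp (- v\<^sup>2) / pi"
proof -
  have "(exp (- x\<^sup>2 / 2))\<^sup>2 = exp (- x\<^sup>2)" for x :: real
    by (simp add: power2_eq_square exp_add[symmetric])
  then show ?thesis
    by (simp add: fock_wf_0 power_mult_distrib power_divide)
qed

lemma cmod_of_real_cis_add_sq:
  "(cmod (complex_of_real A * cis s + complex_of_real B * cis t))\<^sup>2 = A\<^sup>2 + B\<^sup>2 + 2 * A * B * cos (s - t)"
proof -
  have "(cmod (complex_of_real A * cis s + complex_of_real B * cis t))\<^sup>2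
      = (A * cos s + B * cos t)\<^sup>2 + (A * sin s + B * sin t)\<^sup>2"
    by (simp add: cmod_power2)
  also have "\<dots> = A\<^sup>2 + B\<^sup>2 + 2 * A * B * cos (s - t)"
    using sin_cos_squared_add[of s] sin_cos_squared_add[of t] unfolding cos_diff by algebra
  finally show ?thesis .
qed

lemma quad_amp_Phi_state:
  "quad_amp (Phi_state s p) \<theta> \<phi> u v
     = complex_of_real (sqrt p * (fock_wf 0 u * fock_wf 0 v)) * cis 0
     + complex_of_real (s * sqrt (1 - p) * (fock_wf 1 u * fock_wf 1 v)) * cis (- \<theta> - \<phi>)"
proof -
  let ?g = "\<lambda>(m, n). Phi_state s p m n * cis (- (real m * \<theta>)) * cis (- (real n * \<phi>))
        * complex_of_real (fock_wf m u * fock_wf n v)"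
  have "quad_amp (Phi_state s p) \<theta> \<phi> u v = sum ?g {(0, 0), (1, 1)}"
    unfolding quad_amp_def
    by (rule sum.mono_neutral_left) (auto simp: Phi_state_def split: if_splits)
  also have "\<dots> = complex_of_real (sqrt p * (fock_wf 0 u * fock_wf 0 v)) * cis 0
     + complex_of_real (s * sqrt (1 - p) * (fock_wf 1 u * fock_wf 1 v)) * cis (- \<theta> - \<phi>)"
  proof -
    have "cis (- \<phi> - \<theta>) = cis (- \<theta> - \<phi>)"
      by (rule arg_cong[where f = cis]) simp
    then show ?thesis
      by (simp add: Phi_state_def cis_mult mult_ac)
  qed
  finally show ?thesis .
qed

lemma quad_amp_Psi_state:
  "quad_amp (Psi_state s p) \<theta> \<phi> u v
     = complex_of_real (sqrt p * (fock_wf 0 u * fock_wf 1 v)) * cis (- \<phi>)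
     + complex_of_real (s * sqrt (1 - p) * (fock_wf 1 u * fock_wf 0 v)) * cis (- \<theta>)"
proof -
  let ?g = "\<lambda>(m, n). Psi_state s p m n * cis (- (real m * \<theta>)) * cis (- (real n * \<phi>))
        * complex_of_real (fock_wf m u * fock_wf n v)"
  have "quad_amp (Psi_state s p) \<theta> \<phi> u v = sum ?g {(0, 1), (1, 0)}"
    unfolding quad_amp_def
    by (rule sum.mono_neutral_left) (auto simp: Psi_state_def split: if_splits)
  also have "\<dots> = complex_of_real (sqrt p * (fock_wf 0 u * fock_wf 1 v)) * cis (- \<phi>)
     + complex_of_real (s * sqrt (1 - p) * (fock_wf 1 u * fock_wf 0 v)) * cis (- \<theta>)"
    by (simp add: Psi_state_def mult_ac)
  finally show ?thesis .
qed

lemma quad_density_Phi_state: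
  assumes "\<bar>s\<bar> = 1" and "0 \<le> p" and "p \<le> 1"
  shows "quad_density (Phi_state s p) \<theta> \<phi> u v = exp (- u\<^sup>2) * exp (- v\<^sup>2) / pi
      * (even_biquadratic p 0 0 (4 * (1 - p)) u v + 4 * s * sqrt (p * (1 - p)) * cos (\<theta> + \<phi>) * u * v)"
proof -
  have sq: "s\<^sup>2 = 1" "(sqrt p)\<^sup>2 = p" "(sqrt (1 - p))\<^sup>2 = 1 - p"
    using assms by (simp_all add: abs_square_eq_1)
  define F where "F = fock_wf 0 u * fock_wf 0 v"
  have "fock_wf 1 u * fock_wf 1 v = (sqrt 2 * sqrt 2) * u * v * F"
    unfolding fock_wf_1 F_def by (simp add: mult_ac)
  then have F11: "fock_wf 1 u * fock_wf 1 v = 2 * u * v * F"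
    by simp
  have "quad_density (Phi_state s p) \<theta> \<phi> u v
      = (sqrt p * F)\<^sup>2 + (s * sqrt (1 - p) * (2 * u * v * F))\<^sup>2
        + 2 * (sqrt p * F) * (s * sqrt (1 - p) * (2 * u * v * F)) * cos (0 - (- \<theta> - \<phi>))"
    unfolding quad_density_def quad_amp_Phi_state F11 F_def[symmetric] by (rule cmod_of_real_cis_add_sq)
  also have "\<dots> = F\<^sup>2 * (p + 4 * (1 - p) * u\<^sup>2 * v\<^sup>2 + 4 * s * sqrt (p * (1 - p)) * cos (\<theta> + \<phi>) * u * v)"
    unfolding real_sqrt_mult by (simp add: power_mult_distrib sq) (simp add: power2_eq_square algebra_simps)
  finally show ?thesis
    by (simp add: F_def fock_wf_0_product_sq even_biquadratic_def)
qed

lemma quad_density_Psi_state: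
  assumes "\<bar>s\<bar> = 1" and "0 \<le> p" and "p \<le> 1"
  shows "quad_density (Psi_state s p) \<theta> \<phi> u v = exp (- u\<^sup>2) * exp (- v\<^sup>2) / pi
      * (even_biquadratic 0 (2 * (1 - p)) (2 * p) 0 u v + 4 * s * sqrt (p * (1 - p)) * cos (\<theta> - \<phi>) * u * v)"
proof -
  have sq: "s\<^sup>2 = 1" "(sqrt p)\<^sup>2 = p" "(sqrt (1 - p))\<^sup>2 = 1 - p"
    using assms by (simp_all add: abs_square_eq_1)
  define F where "F = fock_wf 0 u * fock_wf 0 v"
  have F01: "fock_wf 0 u * fock_wf 1 v = sqrt 2 * v * F" and F10: "fock_wf 1 u * fock_wf 0 v = sqrt 2 * u * F"
    unfolding fock_wf_1 F_def by (simp_all add: mult_ac)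
  have "quad_density (Psi_state s p) \<theta> \<phi> u v
      = (sqrt p * (sqrt 2 * v * F))\<^sup>2 + (s * sqrt (1 - p) * (sqrt 2 * u * F))\<^sup>2
        + 2 * (sqrt p * (sqrt 2 * v * F)) * (s * sqrt (1 - p) * (sqrt 2 * u * F)) * cos (- \<phi> - - \<theta>)"
    unfolding quad_density_def quad_amp_Psi_state F01 F10 by (rule cmod_of_real_cis_add_sq)
  also have "\<dots> = F\<^sup>2 * (2 * (1 - p) * u\<^sup>2 + 2 * p * v\<^sup>2 + 4 * s * sqrt (p * (1 - p)) * cos (\<theta> - \<phi>) * u * v)"
    unfolding real_sqrt_mult by (simp add: power_mult_distrib sq) (simp add: power2_eq_square algebra_simps)
  finally show ?thesis
    by (simp add: F_def fock_wf_0_product_sq even_biquadratic_def)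
qed

theorem mainTheorem5:
  fixes p :: real and c :: "nat \<Rightarrow> nat \<Rightarrow> complex"
  assumes "0 \<le> p" and "p \<le> 1"
    and "c \<in> {Phi_state 1 p, Phi_state (-1) p, Psi_state 1 p, Psi_state (-1) p}"
  shows "Qcorr c = 4 / pi * sqrt (p * (1 - p)) \<and> \<bar>E00 c\<bar> = 4 / pi * sqrt (p * (1 - p))"
proof -
  define K where "K s = 4 * s * sqrt (p * (1 - p))" for s :: real
  have K: "\<bar>K s\<bar> / pi = 4 / pi * sqrt (p * (1 - p))" if "\<bar>s\<bar> = 1" for s
    using that assms(1,2) by (simp add: K_def abs_mult)
  have "Qcorr (Phi_state s p) = \<bar>K s\<bar> / pi \<and> E00 (Phi_state s p) = K s / pi" if "\<bar>s\<bar> = 1" for s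
    using correlations_of_density[OF quad_density_Phi_state[OF that assms(1,2)]] by (simp add: K_def)
  moreover have "Qcorr (Psi_state s p) = \<bar>K s\<bar> / pi \<and> E00 (Psi_state s p) = K s / pi" if "\<bar>s\<bar> = 1" for s
    using correlations_of_density[OF quad_density_Psi_state[OF that assms(1,2)]] by (simp add: K_def)
  ultimately show ?thesis
    using assms(3) K by (auto simp: abs_divide)
qed

end
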